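(* Let $$A= \begin{pmatrix} 1& -2& 2\\ 2&-1& 2\\ 2&-2& 3 \end{pmatrix}.$$ For positive integers $m,n$ define the triple $F(m,n)=(x,y,z)$ by $$x = \frac{3-(-1)^m}{2}mn+m,\qquad y = \frac{x^2-m^2}{2m},\qquad z = \frac{x^2+m^2}{2m}.$$ Then for every positive integer $n$, $$A^{n-1}\begin{pmatrix}3\\4\\5\end{pmatrix} = F(1,n)^\top .$$
   Context: $A^0$ denotes the $3\times 3$ identity matrix; triples are regarded as row vectors and $\top$ denotes transpose. *)

theory Defs
  imports "HOL-Analysis.Analysis"
begin

primrec matpow :: "real^3^3 \<Rightarrow> nat \<Rightarrow> real^3^3" where
  "matpow A 0 = mat 1"
| "matpow A (Suc k) = A ** matpow A k"

definition A_mat :: "real^3^3" where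
  "A_mat = vector [vector [1, -2, 2], vector [2, -1, 2], vector [2, -2, 3]]"

definition F_x :: "nat \<Rightarrow> nat \<Rightarrow> real" where
  "F_x m n = (3 - (-1) ^ m) / 2 * real m * real n + real m"

definition F :: "nat \<Rightarrow> nat \<Rightarrow> real^3" where
  "F m n = (let x = F_x m n in
     vector [x, (x^2 - (real m)^2) / (2 * real m), (x^2 + (real m)^2) / (2 * real m)])"

end

theory Submission
  imports Defs
begin

text \<open>For \<open>m = 1\<close> the triple \<open>F(1,n)\<close> is Pythagoras' triple
  \<open>(2n+1, 2n(n+1), 2n(n+1)+1)\<close>, and \<open>A\<close> maps the \<open>n\<close>-th triple of this family to the
  \<open>(n+1)\<close>-st; so \<open>A^(n-1)\<close> carries the first one, \<open>(3,4,5)\<close>, to the \<open>n\<close>-th.\<close>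

definition pythagoras_triple :: "nat \<Rightarrow> real^3" where
  "pythagoras_triple n = vector [2 * real n + 1, 2 * real n * (real n + 1),
                                 2 * real n * (real n + 1) + 1]"

lemma matpow_mult_vector_orbit:
  assumes step: "\<And>j. A *v v j = v (Suc j)"
  shows "matpow A k *v v j = v (j + k)"
proof (induction k)
  case 0
  show ?case by simp
next
  case (Suc k)
  have "matpow A (Suc k) *v v j = A *v (matpow A k *v v j)"
    by (simp add: matrix_vector_mul_assoc)
  also have "\<dots> = v (j + Suc k)"
    using Suc step by simp
  finally show ?case .
qed

lemma A_mat_mult_pythagoras_triple:
  "A_mat *v pythagoras_triple n = pythagoras_triple (Suc n)"
  unfolding A_mat_def pythagoras_triple_def
  by (simp add: vec_eq_iff forall_3 matrix_vector_mult_def sum_3 vector_3 algebra_simps)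

lemma pythagoras_triple_1: "pythagoras_triple 1 = vector [3, 4, 5]"
  by (simp add: pythagoras_triple_def)

lemma F_1_eq_pythagoras_triple: "F 1 n = pythagoras_triple n"
  unfolding F_def F_x_def pythagoras_triple_def
  by (simp add: vec_eq_iff forall_3 vector_3 algebra_simps power2_eq_square)

theorem mainTheorem1:
  fixes n :: nat
  assumes "n \<ge> 1"
  shows "matpow A_mat (n - 1) *v (vector [3, 4, 5] :: real^3) = F 1 n"
proof -
  have "matpow A_mat (n - 1) *v pythagoras_triple 1 = pythagoras_triple n"
    using matpow_mult_vector_orbit[where v = pythagoras_triple and k = "n - 1" and j = 1,
                                   OF A_mat_mult_pythagoras_triple] assms
    by simp
  then show ?thesis
    by (simp only: pythagoras_triple_1 F_1_eq_pythagoras_triple)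
qed

end
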